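(* Let $\mathcal S\subseteq\mathbb{R}^3$ be the subset generated by a pair of distinct lines in the plane. (1) If $\mathcal S$ is an HR-cone but not a unit cone, then $\mathcal S$ has a unique pair of generating lines; writing $\mathcal S=(A,{\bf a})$, these lines are the zero set (degenerate hyperbola) $\{{\bf x}\in\mathbb{R}^2: ({\bf x}-{\bf a})^T(A-I)({\bf x}-{\bf a})=0\}$. (2) $\mathcal S$ is a unit cone if and only if the generating lines for $\mathcal S$ are orthogonal, which holds if and only if the cone matrix of $\mathcal S$ is $I$. In this case, the lines in every pair of generating lines for $\mathcal S$ cross at the same point, and every pair of orthogonal lines crossing at this point generates $\mathcal S$.
   Context: For distinct lines $L_1,L_2$ in the plane, the subset of $\mathbb{R}^3$ generated by them is the set of all points $(x,y,\pm z)$ such that $2z$ is the length of a line segment with one endpoint on $L_1$, the other on $L_2$, and midpoint $(x,y)$; $L_1,L_2$ are then called a pair of generating lines for this set. For a symmetric positive definite $2\times 2$ matrix $A$ and ${\bf a}\in\mathbb{R}^2$, the elliptical cone $(A,{\bf a})$ is $\{(x,y,z)\in\mathbb{R}^3: z^2=({\bf x}-{\bf a})^TA({\bf x}-{\bf a}),\ {\bf x}=(x,y)^T\}$, with cone matrix $A$ (uniquely determined by the set). It is an HR-cone if $\det A=1$, and a unit cone if $A=I$, the $2\times2$ identity matrix. *)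

theory Defs
  imports "HOL-Analysis.Analysis"
begin

definition line_through :: "real^2 \<Rightarrow> real^2 \<Rightarrow> (real^2) set" where
  "line_through p d = {p + t *\<^sub>R d | t. True}"

definition is_line :: "(real^2) set \<Rightarrow> bool" where
  "is_line L \<longleftrightarrow> (\<exists>p d. d \<noteq> 0 \<and> L = line_through p d)"

definition orthogonal_lines :: "(real^2) set \<Rightarrow> (real^2) set \<Rightarrow> bool" where
  "orthogonal_lines L1 L2 \<longleftrightarrow>
     (\<exists>p d q e. d \<noteq> 0 \<and> e \<noteq> 0 \<and> L1 = line_through p d \<and> L2 = line_through q e \<and> d \<bullet> e = 0)"

definition generated_set :: "(real^2) set \<Rightarrow> (real^2) set \<Rightarrow> ((real^2) \<times> real) set" where
  "generated_set L1 L2 =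
     {(m, w) | m w. \<exists>P\<in>L1. \<exists>Q\<in>L2. m = (1/2) *\<^sub>R (P + Q) \<and> 2 * \<bar>w\<bar> = dist P Q}"

definition generating_pair :: "((real^2) \<times> real) set \<Rightarrow> (real^2) set \<Rightarrow> (real^2) set \<Rightarrow> bool" where
  "generating_pair S L1 L2 \<longleftrightarrow> is_line L1 \<and> is_line L2 \<and> L1 \<noteq> L2 \<and> generated_set L1 L2 = S"

definition sym_pos_def :: "real^2^2 \<Rightarrow> bool" where
  "sym_pos_def A \<longleftrightarrow> transpose A = A \<and> (\<forall>x. x \<noteq> 0 \<longrightarrow> x \<bullet> (A *v x) > 0)"

definition elliptical_cone :: "real^2^2 \<Rightarrow> real^2 \<Rightarrow> ((real^2) \<times> real) set" where
  "elliptical_cone A a = {(x, z) | x z. z\<^sup>2 = (x - a) \<bullet> (A *v (x - a))}"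

definition is_elliptical_cone :: "((real^2) \<times> real) set \<Rightarrow> bool" where
  "is_elliptical_cone S \<longleftrightarrow> (\<exists>A a. sym_pos_def A \<and> S = elliptical_cone A a)"

definition is_HR_cone :: "((real^2) \<times> real) set \<Rightarrow> bool" where
  "is_HR_cone S \<longleftrightarrow> (\<exists>A a. sym_pos_def A \<and> det A = 1 \<and> S = elliptical_cone A a)"

definition is_unit_cone :: "((real^2) \<times> real) set \<Rightarrow> bool" where
  "is_unit_cone S \<longleftrightarrow> (\<exists>a. S = elliptical_cone (mat 1) a)"

end

theory Submission
  imports Defs
begin

text \<open>Write two crossing lines as \<open>c + \<real>d\<close> and \<open>c + \<real>e\<close>. The segment from \<open>c + t d\<close> to
  \<open>c + s e\<close> has midpoint \<open>c + (t d + s e)/2\<close> and half-length \<open>|(t d - s e)/2|\<close>, so the generated set is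
  the cone \<open>z\<^sup>2 = |R (x - c)|\<^sup>2\<close>, where \<open>R\<close> is the oblique reflection fixing \<open>d\<close> and negating \<open>e\<close>;
  its cone matrix is \<open>R\<^sup>T R\<close>. For \<open>v = a d + b e\<close> one has \<open>|R v|\<^sup>2 - |v|\<^sup>2 = -4ab (d \<bullet> e)\<close>: hence
  \<open>R\<^sup>T R = I\<close> iff \<open>d \<bullet> e = 0\<close>, and otherwise the zero set of \<open>(x - c)\<^sup>T (R\<^sup>T R - I) (x - c)\<close> is exactly
  the pair of lines, which is thus determined by the cone. Since an elliptical cone determines its
  matrix and vertex, and parallel lines (whose midpoints only fill a line) never generate an
  elliptical cone, all statements follow.\<close>

definition cross2 :: "real^2 \<Rightarrow> real^2 \<Rightarrow> real" where
  "cross2 u v = u$1 * v$2 - u$2 * v$1"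

text \<open>Cramer's rule: \<open>v = a d + b e\<close> with \<open>a = cross2 v e / cross2 d e\<close>, \<open>b = cross2 d v / cross2 d e\<close>,
  and \<open>skew_reflect d e v = a d - b e\<close>.\<close>

definition skew_reflect :: "real^2 \<Rightarrow> real^2 \<Rightarrow> real^2 \<Rightarrow> real^2" where
  "skew_reflect d e v = (1 / cross2 d e) *\<^sub>R (cross2 v e *\<^sub>R d - cross2 d v *\<^sub>R e)"

definition cone_matrix :: "real^2 \<Rightarrow> real^2 \<Rightarrow> real^2^2" where
  "cone_matrix d e = transpose (matrix (skew_reflect d e)) ** matrix (skew_reflect d e)"

lemma cross2_add_left: "cross2 (u + v) w = cross2 u w + cross2 v w"
  and cross2_add_right: "cross2 w (u + v) = cross2 w u + cross2 w v"
  and cross2_scaleR_left: "cross2 (c *\<^sub>R u) w = c * cross2 u w"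
  and cross2_scaleR_right: "cross2 w (c *\<^sub>R u) = c * cross2 w u"
  and cross2_self: "cross2 u u = 0"
  by (auto simp: cross2_def algebra_simps)

lemma orthogonal_parallel_imp_zero:
  assumes "d \<bullet> e = 0" "cross2 d e = 0"
  shows "d = 0 \<or> e = 0"
proof -
  have "(d \<bullet> e)\<^sup>2 + (cross2 d e)\<^sup>2 = (d$1 * d$1 + d$2 * d$2) * (e$1 * e$1 + e$2 * e$2)"
    by (simp add: inner_vec_def sum_2 cross2_def power2_eq_square algebra_simps)
  then have "(d$1 = 0 \<and> d$2 = 0) \<or> (e$1 = 0 \<and> e$2 = 0)"
    using assms by simp
  then show ?thesis
    by (auto simp: vec_eq_iff forall_2)
qed

lemma cross2_nonzero_spans:
  assumes "cross2 d e \<noteq> 0"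
  obtains a b where "v = a *\<^sub>R d + b *\<^sub>R e"
proof
  have "cross2 d e *\<^sub>R v = cross2 v e *\<^sub>R d + cross2 d v *\<^sub>R e"
    by (simp add: vec_eq_iff forall_2 cross2_def algebra_simps)
  then show "v = (cross2 v e / cross2 d e) *\<^sub>R d + (cross2 d v / cross2 d e) *\<^sub>R e"
    using assms by (simp add: vec_eq_iff forall_2 field_simps)
qed

lemma linear_skew_reflect: "linear (skew_reflect d e)"
  by (rule linearI)
    (auto simp: skew_reflect_def cross2_add_left cross2_add_right cross2_scaleR_left
      cross2_scaleR_right algebra_simps)

lemma skew_reflect_combination:
  assumes "cross2 d e \<noteq> 0"
  shows "skew_reflect d e (a *\<^sub>R d + b *\<^sub>R e) = a *\<^sub>R d - b *\<^sub>R e"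
  using assms
  by (simp add: skew_reflect_def cross2_add_left cross2_add_right cross2_scaleR_left
      cross2_scaleR_right cross2_self scaleR_diff_right)

lemma skew_reflect_involutive:
  assumes "cross2 d e \<noteq> 0"
  shows "skew_reflect d e (skew_reflect d e v) = v"
proof -
  obtain a b where v: "v = a *\<^sub>R d + b *\<^sub>R e"
    using cross2_nonzero_spans[OF assms] .
  have "skew_reflect d e v = a *\<^sub>R d + (- b) *\<^sub>R e"
    using skew_reflect_combination[OF assms] v by simp
  then show ?thesis
    using skew_reflect_combination[OF assms, of a "- b"] v by simp
qed

lemma inner_self_combination_diff:
  "(a *\<^sub>R d - b *\<^sub>R e) \<bullet> (a *\<^sub>R d - b *\<^sub>R e) - (a *\<^sub>R d + b *\<^sub>R e) \<bullet> (a *\<^sub>R d + b *\<^sub>R e)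
     = - 4 * a * b * (d \<bullet> (e::real^2))"
  by (simp add: inner_add_left inner_add_right inner_diff_left inner_diff_right inner_commute
      algebra_simps)

lemma quadratic_form_cone_matrix:
  "v \<bullet> (cone_matrix d e *v v) = skew_reflect d e v \<bullet> skew_reflect d e v"
proof -
  let ?R = "matrix (skew_reflect d e)"
  have "v \<bullet> (cone_matrix d e *v v) = ((?R *v v) v* ?R) \<bullet> v"
    by (simp add: cone_matrix_def matrix_vector_mul_assoc[symmetric] inner_commute)
  also have "\<dots> = (?R *v v) \<bullet> (?R *v v)"
    by (rule dot_lmul_matrix)
  finally show ?thesis
    by (simp add: matrix_vector_mul(2)[OF linear_skew_reflect])
qed

lemma sym_pos_def_cone_matrix:
  assumes "cross2 d e \<noteq> 0"
  shows "sym_pos_def (cone_matrix d e)"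
  unfolding sym_pos_def_def
proof (intro conjI allI impI)
  show "transpose (cone_matrix d e) = cone_matrix d e"
    by (simp add: cone_matrix_def matrix_transpose_mul)
  fix x :: "real^2"
  assume "x \<noteq> 0"
  then have "skew_reflect d e x \<noteq> 0"
    using skew_reflect_involutive[OF assms, of x] linear_0[OF linear_skew_reflect] by metis
  then show "0 < x \<bullet> (cone_matrix d e *v x)"
    by (simp add: quadratic_form_cone_matrix)
qed

lemma symmetric_matrix_eq_if_quadratic_forms_eq:
  fixes A B :: "real^'n^'n"
  assumes "transpose A = A" "transpose B = B" "\<And>v. v \<bullet> (A *v v) = v \<bullet> (B *v v)"
  shows "A = B"
proof -
  have polarization: "4 * (v \<bullet> (M *v w)) = (v + w) \<bullet> (M *v (v + w)) - (v - w) \<bullet> (M *v (v - w))"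
    if "transpose M = M" for M :: "real^'n^'n" and v w
  proof -
    have "w \<bullet> (M *v v) = (transpose M *v w) \<bullet> v"
      by (simp add: dot_lmul_matrix)
    also have "\<dots> = v \<bullet> (M *v w)"
      by (simp add: that inner_commute)
    finally have "w \<bullet> (M *v v) = v \<bullet> (M *v w)" .
    then show ?thesis
      unfolding matrix_vector_right_distrib matrix_vector_mult_diff_distrib
        inner_add_left inner_add_right inner_diff_left inner_diff_right
      by linarith
  qed
  have "4 * (v \<bullet> (A *v w)) = 4 * (v \<bullet> (B *v w))" for v w
    unfolding polarization[OF assms(1)] polarization[OF assms(2)] assms(3) ..
  then have "A *v w = B *v w" for w
    by (subst vector_eq_ldot[symmetric]) simp
  then show ?thesis
    using matrix_eq by blast
qed

lemma cone_matrix_eq_mat_1_iff: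
  assumes D: "cross2 d e \<noteq> 0"
  shows "cone_matrix d e = mat 1 \<longleftrightarrow> d \<bullet> e = 0"
proof
  assume "cone_matrix d e = mat 1"
  then have "skew_reflect d e (d + e) \<bullet> skew_reflect d e (d + e) = (d + e) \<bullet> (d + e)"
    by (metis quadratic_form_cone_matrix matrix_vector_mul_lid)
  then show "d \<bullet> e = 0"
    using skew_reflect_combination[OF D, of 1 1] inner_self_combination_diff[of 1 d 1 e] by simp
next
  assume de: "d \<bullet> e = 0"
  show "cone_matrix d e = mat 1"
  proof (rule symmetric_matrix_eq_if_quadratic_forms_eq)
    show "transpose (cone_matrix d e) = cone_matrix d e"
      using sym_pos_def_cone_matrix[OF D] unfolding sym_pos_def_def by blast
    show "transpose (mat 1 :: real^2^2) = mat 1"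
      by simp
    fix v :: "real^2"
    obtain a b where v: "v = a *\<^sub>R d + b *\<^sub>R e"
      using cross2_nonzero_spans[OF D] .
    show "v \<bullet> (cone_matrix d e *v v) = v \<bullet> (mat 1 *v v)"
      using inner_self_combination_diff[of a d b e] de
      by (simp add: quadratic_form_cone_matrix v skew_reflect_combination[OF D])
  qed
qed

lemma line_through_base: "p \<in> line_through p d"
  unfolding line_through_def by (auto intro: exI[of _ 0])

lemma generated_set_crossing_lines:
  assumes D: "cross2 d e \<noteq> 0"
  shows "generated_set (line_through c d) (line_through c e) = elliptical_cone (cone_matrix d e) c"
proof (rule set_eqI, rule iffI)
  fix y
  assume "y \<in> generated_set (line_through c d) (line_through c e)"
  then obtain m w t s where y: "y = (m, w)" and m: "m = (1/2) *\<^sub>R ((c + t *\<^sub>R d) + (c + s *\<^sub>R e))"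
    and w: "2 * \<bar>w\<bar> = dist (c + t *\<^sub>R d) (c + s *\<^sub>R e)"
    unfolding generated_set_def line_through_def by blast
  have "m - c = (t/2) *\<^sub>R d + (s/2) *\<^sub>R e"
    using m by (simp add: vec_eq_iff field_simps)
  then have "skew_reflect d e (m - c) = (t/2) *\<^sub>R d - (s/2) *\<^sub>R e"
    using skew_reflect_combination[OF D] by simp
  also have "\<dots> = (1/2) *\<^sub>R ((c + t *\<^sub>R d) - (c + s *\<^sub>R e))"
    by (simp add: algebra_simps)
  finally have "norm (skew_reflect d e (m - c)) = \<bar>w\<bar>"
    using w by (simp add: dist_norm)
  then have "w\<^sup>2 = (m - c) \<bullet> (cone_matrix d e *v (m - c))"
    by (simp add: quadratic_form_cone_matrix power2_norm_eq_inner[symmetric])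
  then show "y \<in> elliptical_cone (cone_matrix d e) c"
    using y unfolding elliptical_cone_def by blast
next
  fix y
  assume "y \<in> elliptical_cone (cone_matrix d e) c"
  then obtain x z where y: "y = (x, z)" and z: "z\<^sup>2 = (x - c) \<bullet> (cone_matrix d e *v (x - c))"
    unfolding elliptical_cone_def by blast
  obtain a b where v: "x - c = a *\<^sub>R d + b *\<^sub>R e"
    using cross2_nonzero_spans[OF D] .
  define P Q where "P = c + (2*a) *\<^sub>R d" and "Q = c + (2*b) *\<^sub>R e"
  have "(norm (skew_reflect d e (x - c)))\<^sup>2 = z\<^sup>2"
    using z by (simp add: quadratic_form_cone_matrix power2_norm_eq_inner)
  then have "norm (skew_reflect d e (x - c)) = \<bar>z\<bar>"
    using power2_eq_iff_nonneg[of "norm (skew_reflect d e (x - c))" "\<bar>z\<bar>"] by simp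
  moreover have "P - Q = 2 *\<^sub>R skew_reflect d e (x - c)"
    unfolding v skew_reflect_combination[OF D] P_def Q_def by (simp add: algebra_simps)
  ultimately have "2 * \<bar>z\<bar> = dist P Q"
    by (simp add: dist_norm)
  moreover have "P \<in> line_through c d" "Q \<in> line_through c e"
    unfolding P_def Q_def line_through_def by blast+
  moreover have "x = (1/2) *\<^sub>R (P + Q)"
    using v unfolding P_def Q_def by (simp add: vec_eq_iff field_simps)
  ultimately show "y \<in> generated_set (line_through c d) (line_through c e)"
    using y unfolding generated_set_def by blast
qed

lemma cone_matrix_minus_id_zero_set:
  assumes D: "cross2 d e \<noteq> 0" and de: "d \<bullet> e \<noteq> 0"
  shows "{x. (x - c) \<bullet> ((cone_matrix d e - mat 1) *v (x - c)) = 0}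
           = line_through c d \<union> line_through c e"
proof (rule set_eqI)
  fix x
  obtain a b where v: "x - c = a *\<^sub>R d + b *\<^sub>R e"
    using cross2_nonzero_spans[OF D] .
  have "(x - c) \<bullet> ((cone_matrix d e - mat 1) *v (x - c))
          = skew_reflect d e (x - c) \<bullet> skew_reflect d e (x - c) - (x - c) \<bullet> (x - c)"
    by (simp add: matrix_vector_mult_diff_rdistrib inner_diff_right quadratic_form_cone_matrix)
  also have "\<dots> = - 4 * a * b * (d \<bullet> e)"
    unfolding v skew_reflect_combination[OF D] by (rule inner_self_combination_diff)
  finally have "(x - c) \<bullet> ((cone_matrix d e - mat 1) *v (x - c)) = - 4 * a * b * (d \<bullet> e)" .
  moreover have "x \<in> line_through c d \<longleftrightarrow> b = 0"
  proof
    assume "x \<in> line_through c d"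
    then obtain t where "x = c + t *\<^sub>R d"
      unfolding line_through_def by blast
    then have "cross2 d (a *\<^sub>R d + b *\<^sub>R e) = cross2 d (t *\<^sub>R d)"
      using v by simp
    then show "b = 0"
      using D by (simp add: cross2_add_right cross2_scaleR_right cross2_self)
  next
    assume "b = 0"
    then show "x \<in> line_through c d"
      using v unfolding line_through_def by (auto simp: algebra_simps intro!: exI[of _ a])
  qed
  moreover have "x \<in> line_through c e \<longleftrightarrow> a = 0"
  proof
    assume "x \<in> line_through c e"
    then obtain t where "x = c + t *\<^sub>R e"
      unfolding line_through_def by blast
    then have "cross2 (a *\<^sub>R d + b *\<^sub>R e) e = cross2 (t *\<^sub>R e) e"
      using v by simp
    then show "a = 0"
      using D by (simp add: cross2_add_left cross2_scaleR_left cross2_self)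
  next
    assume "a = 0"
    then show "x \<in> line_through c e"
      using v unfolding line_through_def by (auto simp: algebra_simps intro!: exI[of _ b])
  qed
  ultimately show "x \<in> {x. (x - c) \<bullet> ((cone_matrix d e - mat 1) *v (x - c)) = 0}
                     \<longleftrightarrow> x \<in> line_through c d \<union> line_through c e"
    using de by auto
qed

lemma sym_pos_def_mat_1: "sym_pos_def (mat 1)"
  unfolding sym_pos_def_def by simp

lemma sym_pos_def_quadratic_nonneg: "sym_pos_def A \<Longrightarrow> 0 \<le> v \<bullet> (A *v v)"
  unfolding sym_pos_def_def by (cases "v = 0") (auto intro: less_imp_le)

lemma elliptical_cone_eqD:
  assumes A: "sym_pos_def A" and B: "sym_pos_def B"
    and eq: "elliptical_cone A a = elliptical_cone B b"
  shows "A = B" "a = b"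
proof -
  have q: "(x - a) \<bullet> (A *v (x - a)) = (x - b) \<bullet> (B *v (x - b))" for x
  proof -
    let ?q = "(x - a) \<bullet> (A *v (x - a))"
    have "(sqrt ?q)\<^sup>2 = ?q"
      using sym_pos_def_quadratic_nonneg[OF A] by simp
    then have "(x, sqrt ?q) \<in> elliptical_cone B b"
      using eq unfolding elliptical_cone_def by blast
    then show ?thesis
      using sym_pos_def_quadratic_nonneg[OF A] unfolding elliptical_cone_def by simp
  qed
  have "(a - b) \<bullet> (B *v (a - b)) = 0"
    using q[of a] by simp
  then show "a = b"
    using B unfolding sym_pos_def_def by (metis less_irrefl right_minus_eq)
  show "A = B"
  proof (rule symmetric_matrix_eq_if_quadratic_forms_eq)
    show "transpose A = A" "transpose B = B"
      using A B unfolding sym_pos_def_def by blast+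
    show "v \<bullet> (A *v v) = v \<bullet> (B *v v)" for v
      using q[of "v + a"] \<open>a = b\<close> by simp
  qed
qed

lemma unit_cone_iff_cone_matrix_eq_mat_1:
  "is_unit_cone S \<longleftrightarrow>
     is_elliptical_cone S \<and> (\<forall>A a. sym_pos_def A \<and> S = elliptical_cone A a \<longrightarrow> A = mat 1)"
proof
  assume "is_unit_cone S"
  then obtain c where S: "S = elliptical_cone (mat 1) c"
    unfolding is_unit_cone_def by blast
  then have "A = mat 1" if "sym_pos_def A" "S = elliptical_cone A a" for A a
    using elliptical_cone_eqD(1)[OF that(1) sym_pos_def_mat_1] that(2) by simp
  then show "is_elliptical_cone S \<and> (\<forall>A a. sym_pos_def A \<and> S = elliptical_cone A a \<longrightarrow> A = mat 1)"
    using S sym_pos_def_mat_1 unfolding is_elliptical_cone_def by blast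
next
  assume "is_elliptical_cone S \<and> (\<forall>A a. sym_pos_def A \<and> S = elliptical_cone A a \<longrightarrow> A = mat 1)"
  then show "is_unit_cone S"
    unfolding is_elliptical_cone_def is_unit_cone_def by blast
qed

lemma elliptical_cone_over_every_point:
  assumes "is_elliptical_cone S"
  shows "\<exists>z. (x, z) \<in> S"
proof -
  obtain A a where A: "sym_pos_def A" and S: "S = elliptical_cone A a"
    using assms unfolding is_elliptical_cone_def by blast
  have "(sqrt ((x - a) \<bullet> (A *v (x - a))))\<^sup>2 = (x - a) \<bullet> (A *v (x - a))"
    using sym_pos_def_quadratic_nonneg[OF A] by simp
  then show ?thesis
    unfolding S elliptical_cone_def by blast
qed

text \<open>Midpoints of segments between parallel lines lie on one line; shifting one of them by a
  normal vector \<open>n\<close> of the lines gives a point with no point of the generated set above it.\<close>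

lemma generated_set_parallel_lines_not_elliptical:
  assumes D: "cross2 d e = 0" and d: "d \<noteq> 0"
  shows "\<not> is_elliptical_cone (generated_set (line_through p d) (line_through q e))"
proof
  assume ell: "is_elliptical_cone (generated_set (line_through p d) (line_through q e))"
  define n :: "real^2" where "n = vector [- d$2, d$1]"
  from elliptical_cone_over_every_point[OF ell, of "(1/2) *\<^sub>R (p + q) + n"]
  obtain t s where m: "(1/2) *\<^sub>R (p + q) + n = (1/2) *\<^sub>R ((p + t *\<^sub>R d) + (q + s *\<^sub>R e))"
    unfolding generated_set_def line_through_def by blast
  have "n = (t/2) *\<^sub>R d + (s/2) *\<^sub>R e"
    unfolding vec_eq_iff
  proof
    fix i
    have "n$i * 4 = s * (e$i * 2) + t * (d$i * 2)"
      using arg_cong[where f="\<lambda>v. v$i", OF m] by (simp add: field_simps)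
    then show "n$i = ((t/2) *\<^sub>R d + (s/2) *\<^sub>R e)$i"
      by simp
  qed
  then have "cross2 d n = (s/2) * cross2 d e"
    by (simp add: cross2_add_right cross2_scaleR_right cross2_self)
  then have "d$1 * d$1 + d$2 * d$2 = 0"
    using D by (simp add: n_def cross2_def del: sum_squares_eq_zero_iff)
  then show False
    using d by (simp add: vec_eq_iff forall_2)
qed

lemma line_through_shift:
  assumes "x \<in> line_through p d"
  shows "line_through p d = line_through x d"
proof -
  obtain a where x: "x = p + a *\<^sub>R d"
    using assms unfolding line_through_def by blast
  have "p + t *\<^sub>R d = x + (t - a) *\<^sub>R d" "x + t *\<^sub>R d = p + (a + t) *\<^sub>R d" for t
    unfolding x by (simp_all add: algebra_simps)
  then show ?thesis
    unfolding line_through_def by blast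
qed

lemma crossing_lines_meet:
  assumes "cross2 d e \<noteq> 0"
  shows "\<exists>c. c \<in> line_through p d \<and> c \<in> line_through q e"
proof -
  obtain a b where "q - p = a *\<^sub>R d + b *\<^sub>R e"
    using cross2_nonzero_spans[OF assms] .
  then have "p + a *\<^sub>R d = q + (- b) *\<^sub>R e"
    by (simp add: algebra_simps)
  then show ?thesis
    unfolding line_through_def by blast
qed

lemma line_through_rescale:
  assumes "k \<noteq> 0"
  shows "line_through x (k *\<^sub>R d) = line_through x d"
proof -
  have "x + t *\<^sub>R (k *\<^sub>R d) = x + (t * k) *\<^sub>R d" "x + t *\<^sub>R d = x + (t / k) *\<^sub>R (k *\<^sub>R d)" for t
    using assms by simp_all
  then show ?thesis
    unfolding line_through_def by blast
qed

lemma line_through_two_points: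
  assumes "x \<in> line_through p d" "y \<in> line_through p d" "x \<noteq> y"
  shows "line_through p d = line_through x (y - x)"
proof -
  obtain a b where x: "x = p + a *\<^sub>R d" and y: "y = p + b *\<^sub>R d"
    using assms(1,2) unfolding line_through_def by blast
  then have "y - x = (b - a) *\<^sub>R d" "b - a \<noteq> 0"
    using assms(3) by (auto simp: algebra_simps)
  then show ?thesis
    using line_through_shift[OF assms(1)] line_through_rescale by metis
qed

lemma is_line_eq_if_two_common_points:
  assumes "is_line L" "is_line M" "x \<in> L" "y \<in> L" "x \<in> M" "y \<in> M" "x \<noteq> y"
  shows "L = M"
proof -
  obtain p d q e where L: "L = line_through p d" and M: "M = line_through q e"
    using assms(1,2) unfolding is_line_def by blast
  have "L = line_through x (y - x)"
    using assms(3,4,7) unfolding L by (rule line_through_two_points)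
  moreover have "M = line_through x (y - x)"
    using assms(5,6,7) unfolding M by (rule line_through_two_points)
  ultimately show ?thesis
    by simp
qed

lemma is_line_subset_union:
  assumes L: "is_line L" and L1: "is_line L1" and L2: "is_line L2" and sub: "L \<subseteq> L1 \<union> L2"
  shows "L = L1 \<or> L = L2"
proof -
  obtain p d where d: "d \<noteq> 0" and Ld: "L = line_through p d"
    using L unfolding is_line_def by blast
  define x y z where "x = p + 0 *\<^sub>R d" and "y = p + 1 *\<^sub>R d" and "z = p + 2 *\<^sub>R d"
  have xyz: "x \<in> L" "y \<in> L" "z \<in> L"
    unfolding x_def y_def z_def Ld line_through_def by blast+
  have "x \<noteq> y" "x \<noteq> z" "y \<noteq> z"
    unfolding x_def y_def z_def using d
    by (simp_all only: add_left_cancel scaleR_cancel_right) simp_all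
  note L1_eq = is_line_eq_if_two_common_points[OF L L1] and L2_eq = is_line_eq_if_two_common_points[OF L L2]
  have "x \<in> L1 \<or> x \<in> L2" "y \<in> L1 \<or> y \<in> L2" "z \<in> L1 \<or> z \<in> L2"
    using xyz sub by blast+
  then show ?thesis
    using L1_eq[OF xyz(1,2) _ _ \<open>x \<noteq> y\<close>] L1_eq[OF xyz(1,3) _ _ \<open>x \<noteq> z\<close>]
      L1_eq[OF xyz(2,3) _ _ \<open>y \<noteq> z\<close>] L2_eq[OF xyz(1,2) _ _ \<open>x \<noteq> y\<close>]
      L2_eq[OF xyz(1,3) _ _ \<open>x \<noteq> z\<close>] L2_eq[OF xyz(2,3) _ _ \<open>y \<noteq> z\<close>]
    by blast

qed

lemma line_pairs_eq_if_union_eq: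
  assumes "is_line M1" "is_line M2" "is_line L1" "is_line L2"
    and "M1 \<union> M2 = L1 \<union> L2" "M1 \<noteq> M2"
  shows "{M1, M2} = {L1, L2}"
proof -
  have "M1 = L1 \<or> M1 = L2" "M2 = L1 \<or> M2 = L2"
    using is_line_subset_union[OF assms(1,3,4)] is_line_subset_union[OF assms(2,3,4)] assms(5)
    by blast+
  then show ?thesis
    using assms(6) by auto
qed

lemma generating_pair_of_elliptical_cone:
  assumes gen: "generating_pair S M1 M2" and A: "sym_pos_def A" and S: "S = elliptical_cone A a"
  obtains d e where "cross2 d e \<noteq> 0" "M1 = line_through a d" "M2 = line_through a e"
    "A = cone_matrix d e"
proof -
  obtain p d q e where d: "d \<noteq> 0" and M1: "M1 = line_through p d" and M2: "M2 = line_through q e"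
    using gen unfolding generating_pair_def is_line_def by blast
  have gen_S: "generated_set M1 M2 = S"
    using gen unfolding generating_pair_def by blast
  have "is_elliptical_cone S"
    using A S unfolding is_elliptical_cone_def by blast
  then have D: "cross2 d e \<noteq> 0"
    using generated_set_parallel_lines_not_elliptical[OF _ d] gen_S M1 M2 by blast
  obtain c where "c \<in> line_through p d" "c \<in> line_through q e"
    using crossing_lines_meet[OF D] by blast
  then have M1c: "M1 = line_through c d" and M2c: "M2 = line_through c e"
    using M1 M2 line_through_shift by blast+
  then have "elliptical_cone (cone_matrix d e) c = elliptical_cone A a"
    using gen_S S generated_set_crossing_lines[OF D] by simp
  then have "cone_matrix d e = A" "c = a"
    using elliptical_cone_eqD[OF sym_pos_def_cone_matrix[OF D] A] by blast+
  then show thesis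
    using that D M1c M2c by blast
qed

lemma generating_pair_union_eq_zero_set:
  assumes gen: "generating_pair S M1 M2" and A: "sym_pos_def A" "A \<noteq> mat 1"
    and S: "S = elliptical_cone A a"
  shows "M1 \<union> M2 = {x. (x - a) \<bullet> ((A - mat 1) *v (x - a)) = 0}"
proof -
  obtain d e where D: "cross2 d e \<noteq> 0" and M: "M1 = line_through a d" "M2 = line_through a e"
    and A_eq: "A = cone_matrix d e"
    using generating_pair_of_elliptical_cone[OF gen A(1) S] .
  have "d \<bullet> e \<noteq> 0"
    using cone_matrix_eq_mat_1_iff[OF D] A(2) A_eq by simp
  then show ?thesis
    using cone_matrix_minus_id_zero_set[OF D] M A_eq by simp
qed

lemma orthogonal_lines_meet:
  assumes "orthogonal_lines M1 M2"
  shows "\<exists>c. c \<in> M1 \<and> c \<in> M2"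
  using assms crossing_lines_meet orthogonal_parallel_imp_zero unfolding orthogonal_lines_def by metis

lemma orthogonal_lines_neq:
  assumes "orthogonal_lines M1 M2"
  shows "M1 \<noteq> M2"
proof
  assume "M1 = M2"
  obtain p d q e where d: "d \<noteq> 0" and e: "e \<noteq> 0" and M1: "M1 = line_through p d"
    and M2: "M2 = line_through q e" and de: "d \<bullet> e = 0"
    using assms unfolding orthogonal_lines_def by blast
  have "q \<in> M1" "q + e \<in> M1"
    using \<open>M1 = M2\<close> unfolding M2 line_through_def by (auto intro: exI[of _ 0] exI[of _ 1])
  then obtain s t where "q = p + s *\<^sub>R d" "q + e = p + t *\<^sub>R d"
    unfolding M1 line_through_def by blast
  then have "e = (t - s) *\<^sub>R d"
    by (simp add: algebra_simps)
  then have "(t - s) * (d \<bullet> d) = 0"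
    using de by simp
  then show False
    using d e \<open>e = (t - s) *\<^sub>R d\<close> by simp
qed

lemma generated_set_orthogonal_lines:
  assumes orth: "orthogonal_lines M1 M2" and c: "c \<in> M1" "c \<in> M2"
  shows "generated_set M1 M2 = elliptical_cone (mat 1) c"
proof -
  obtain p d q e where d: "d \<noteq> 0" and e: "e \<noteq> 0" and M1: "M1 = line_through p d"
    and M2: "M2 = line_through q e" and de: "d \<bullet> e = 0"
    using orth unfolding orthogonal_lines_def by blast
  have D: "cross2 d e \<noteq> 0"
    using orthogonal_parallel_imp_zero[OF de] d e by blast
  have "M1 = line_through c d" "M2 = line_through c e"
    using c M1 M2 line_through_shift by blast+
  then show ?thesis
    using generated_set_crossing_lines[OF D] cone_matrix_eq_mat_1_iff[OF D] de by simp
qed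

lemma generating_pair_orthogonal_iff_unit_cone:
  assumes gen: "generating_pair S L1 L2"
  shows "orthogonal_lines L1 L2 \<longleftrightarrow> is_unit_cone S"
proof
  assume orth: "orthogonal_lines L1 L2"
  then obtain c where "c \<in> L1" "c \<in> L2"
    using orthogonal_lines_meet by blast
  then have "S = elliptical_cone (mat 1) c"
    using generated_set_orthogonal_lines[OF orth] gen unfolding generating_pair_def by simp
  then show "is_unit_cone S"
    unfolding is_unit_cone_def by blast
next
  assume "is_unit_cone S"
  then obtain a where "S = elliptical_cone (mat 1) a"
    unfolding is_unit_cone_def by blast
  then obtain d e where D: "cross2 d e \<noteq> 0" and L: "L1 = line_through a d" "L2 = line_through a e"
    and "mat 1 = cone_matrix d e"
    using generating_pair_of_elliptical_cone[OF gen sym_pos_def_mat_1] by metis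
  then have "d \<bullet> e = 0"
    using cone_matrix_eq_mat_1_iff[OF D] by simp
  moreover have "d \<noteq> 0" "e \<noteq> 0"
    using D by (auto simp: cross2_def)
  ultimately show "orthogonal_lines L1 L2"
    unfolding orthogonal_lines_def L by blast
qed

lemma orthogonal_lines_generate_unit_cone:
  assumes "orthogonal_lines M1 M2" "a \<in> M1" "a \<in> M2"
  shows "generating_pair (elliptical_cone (mat 1) a) M1 M2"
  using assms generated_set_orthogonal_lines orthogonal_lines_neq
  unfolding generating_pair_def orthogonal_lines_def is_line_def by metis

theorem theorem3p6:
  fixes S :: "((real^2) \<times> real) set" and L1 L2 :: "(real^2) set"
  assumes gen: "generating_pair S L1 L2"
  shows
    "(is_HR_cone S \<and> \<not> is_unit_cone S \<longrightarrow>
        (\<forall>M1 M2. generating_pair S M1 M2 \<longrightarrow> {M1, M2} = {L1, L2}) \<and>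
        (\<forall>A a. sym_pos_def A \<and> S = elliptical_cone A a \<longrightarrow>
           L1 \<union> L2 = {x. (x - a) \<bullet> ((A - mat 1) *v (x - a)) = 0}))
     \<and> (is_unit_cone S \<longleftrightarrow> orthogonal_lines L1 L2)
     \<and> (orthogonal_lines L1 L2 \<longleftrightarrow>
          (is_elliptical_cone S \<and>
           (\<forall>A a. sym_pos_def A \<and> S = elliptical_cone A a \<longrightarrow> A = mat 1)))
     \<and> (is_unit_cone S \<longrightarrow>
          (\<exists>p. (\<forall>M1 M2. generating_pair S M1 M2 \<longrightarrow> p \<in> M1 \<inter> M2) \<and>
               (\<forall>M1 M2. is_line M1 \<and> is_line M2 \<and> orthogonal_lines M1 M2 \<and> p \<in> M1 \<inter> M2
                   \<longrightarrow> generating_pair S M1 M2)))"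
proof (intro conjI impI allI)
  have "is_unit_cone S \<longleftrightarrow> orthogonal_lines L1 L2"
    using generating_pair_orthogonal_iff_unit_cone[OF gen] by simp
  then show "is_unit_cone S \<longleftrightarrow> orthogonal_lines L1 L2"
    "orthogonal_lines L1 L2 \<longleftrightarrow> is_elliptical_cone S \<and>
       (\<forall>A a. sym_pos_def A \<and> S = elliptical_cone A a \<longrightarrow> A = mat 1)"
    using unit_cone_iff_cone_matrix_eq_mat_1 by blast+
  fix A a
  assume "is_HR_cone S \<and> \<not> is_unit_cone S" and "sym_pos_def A \<and> S = elliptical_cone A a"
  then show "L1 \<union> L2 = {x. (x - a) \<bullet> ((A - mat 1) *v (x - a)) = 0}"
    using generating_pair_union_eq_zero_set[OF gen] unfolding is_unit_cone_def by blast
next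
  fix M1 M2
  assume "is_HR_cone S \<and> \<not> is_unit_cone S" and M: "generating_pair S M1 M2"
  then obtain A a where A: "sym_pos_def A" "A \<noteq> mat 1" "S = elliptical_cone A a"
    unfolding is_HR_cone_def is_unit_cone_def by blast
  show "{M1, M2} = {L1, L2}"
    using line_pairs_eq_if_union_eq generating_pair_union_eq_zero_set[OF M A(1,2,3)]
      generating_pair_union_eq_zero_set[OF gen A(1,2,3)] M gen
    unfolding generating_pair_def by metis
next
  assume "is_unit_cone S"
  then obtain a where S: "S = elliptical_cone (mat 1) a"
    unfolding is_unit_cone_def by blast
  have "a \<in> M1 \<inter> M2" if "generating_pair S M1 M2" for M1 M2
    using generating_pair_of_elliptical_cone[OF that sym_pos_def_mat_1 S] line_through_base
    by (metis IntI)
  then show "\<exists>p. (\<forall>M1 M2. generating_pair S M1 M2 \<longrightarrow> p \<in> M1 \<inter> M2) \<and>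
      (\<forall>M1 M2. is_line M1 \<and> is_line M2 \<and> orthogonal_lines M1 M2 \<and> p \<in> M1 \<inter> M2
         \<longrightarrow> generating_pair S M1 M2)"
    using orthogonal_lines_generate_unit_cone S by blast
qed

end
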